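(* Let $\mathbb{Z}[t]$ be the polynomial ring in one variable over $\mathbb{Z}$. For all integers $j,r\ge1$ and all primes $p$, the cohomology group $H^j(\Gamma(SL_2(\mathbb{Z}[t]),p^r);\mathbb{F}_p)$ is not finitely generated (as an $\mathbb{F}_p$-vector space).
   Context: $\Gamma(SL_2(\mathbb{Z}[t]),p^r)=\ker\big(SL_2(\mathbb{Z}[t])\to SL_2(\mathbb{Z}[t]\otimes_{\mathbb{Z}}\mathbb{Z}/p^r)\big)$; cohomology is group cohomology with trivial coefficients $\mathbb{F}_p$. *)

theory Defs
  imports "HOL-Computational_Algebra.Polynomial" "HOL-Algebra.Group"
begin

text \<open>A 2x2 matrix (a b; c d) over Z[t] is encoded as the tuple (a, b, c, d).\<close>
type_synonym mat2 = "int poly \<times> int poly \<times> int poly \<times> int poly"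

fun mat2_mult :: "mat2 \<Rightarrow> mat2 \<Rightarrow> mat2" where
  "mat2_mult (a, b, c, d) (a', b', c', d') =
     (a * a' + b * c', a * b' + b * d', c * a' + d * c', c * b' + d * d')"

definition mat2_one :: mat2 where "mat2_one = (1, 0, 0, 1)"

fun mat2_det :: "mat2 \<Rightarrow> int poly" where
  "mat2_det (a, b, c, d) = a * d - b * c"

text \<open>A polynomial over Z is zero modulo m iff all its coefficients are divisible by m,
  i.e. it lies in the kernel of Z[t] -> Z[t] tensor Z/m = (Z/m)[t].\<close>
definition poly_zero_mod :: "int \<Rightarrow> int poly \<Rightarrow> bool" where
  "poly_zero_mod m q \<longleftrightarrow> (\<forall>i. m dvd coeff q i)"

fun in_Gamma :: "int \<Rightarrow> nat \<Rightarrow> mat2 \<Rightarrow> bool" where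
  "in_Gamma p r (a, b, c, d) \<longleftrightarrow>
     a * d - b * c = 1 \<and>
     poly_zero_mod (p ^ r) (a - 1) \<and> poly_zero_mod (p ^ r) b \<and>
     poly_zero_mod (p ^ r) c \<and> poly_zero_mod (p ^ r) (d - 1)"

definition Gamma :: "int \<Rightarrow> nat \<Rightarrow> mat2 monoid" where
  "Gamma p r = \<lparr> carrier = {M. in_Gamma p r M}, mult = mat2_mult, one = mat2_one \<rparr>"

text \<open>An n-cochain is a function on n-tuples (lists of length n) of group elements;
  values are integers read modulo p (i.e. elements of F_p).\<close>

definition merge_at :: "('a, 'b) monoid_scheme \<Rightarrow> nat \<Rightarrow> 'a list \<Rightarrow> 'a list" where
  "merge_at G i gs = take i gs @ [gs ! i \<otimes>\<^bsub>G\<^esub> gs ! (i + 1)] @ drop (i + 2) gs"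

definition cobdry :: "('a, 'b) monoid_scheme \<Rightarrow> nat \<Rightarrow> ('a list \<Rightarrow> int) \<Rightarrow> 'a list \<Rightarrow> int" where
  "cobdry G n f gs = f (tl gs) + (\<Sum>i<n. (-1) ^ (i + 1) * f (merge_at G i gs))
                      + (-1) ^ (n + 1) * f (butlast gs)"

definition tuples :: "('a, 'b) monoid_scheme \<Rightarrow> nat \<Rightarrow> 'a list set" where
  "tuples G n = {gs. length gs = n \<and> set gs \<subseteq> carrier G}"

definition is_cocycle :: "('a, 'b) monoid_scheme \<Rightarrow> int \<Rightarrow> nat \<Rightarrow> ('a list \<Rightarrow> int) \<Rightarrow> bool" where
  "is_cocycle G p n f \<longleftrightarrow> (\<forall>gs \<in> tuples G (n + 1). p dvd cobdry G n f gs)"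

definition is_coboundary :: "('a, 'b) monoid_scheme \<Rightarrow> int \<Rightarrow> nat \<Rightarrow> ('a list \<Rightarrow> int) \<Rightarrow> bool" where
  "is_coboundary G p n f \<longleftrightarrow>
     (\<exists>h. \<forall>gs \<in> tuples G n. p dvd (f gs - cobdry G (n - 1) h gs))"

text \<open>H^n(G; F_p) (n \<ge> 1) is finitely generated as an F_p-vector space: there are finitely
  many cocycles whose classes span Z^n / B^n.\<close>
definition cohom_fin_gen :: "('a, 'b) monoid_scheme \<Rightarrow> int \<Rightarrow> nat \<Rightarrow> bool" where
  "cohom_fin_gen G p n \<longleftrightarrow>
     (\<exists>cs :: ('a list \<Rightarrow> int) list.
        (\<forall>c \<in> set cs. is_cocycle G p n c) \<and>
        (\<forall>f. is_cocycle G p n f \<longrightarrow>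
           (\<exists>a :: nat \<Rightarrow> int.
              is_coboundary G p n (\<lambda>gs. f gs - (\<Sum>k<length cs. a k * (cs ! k) gs)))))"

end

theory Submission
  imports Defs "HOL-Combinatorics.Permutations"
begin

text \<open>For every k, reading the k-th coefficient of the upper right entry divided by \<open>p^r\<close>
  is a homomorphism \<open>\<phi>\<^sub>k : \<Gamma> \<rightarrow> \<bbbF>\<^sub>p\<close>, because the correction term of a product lies in \<open>p^(2r)\<close>.
  The elementary matrices \<open>E\<^sub>k\<close> with upper right entry \<open>p^r t^k\<close> commute and satisfy
  \<open>\<phi>\<^sub>m(E\<^sub>k) = \<delta>\<^sub>m\<^sub>k\<close>. Splitting the indices into infinitely many blocks of size j, the cup
  product of the \<open>\<phi>\<close>'s of one block is a j-cocycle, and it is evaluated against the abelian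
  j-cycle (the image of the fundamental class of a j-torus) built from the \<open>E\<^sub>k\<close> of any block.
  Coboundaries vanish on abelian cycles, and the evaluation matrix is the identity, so no
  finite set of classes can span \<open>H\<^sup>j\<close>.\<close>

lemma length_merge_at: "i < n \<Longrightarrow> length gs = Suc n \<Longrightarrow> length (merge_at G i gs) = n"
  by (simp add: merge_at_def)

lemma nth_merge_at:
  assumes "i < n" "length gs = Suc n" "m < n"
  shows "merge_at G i gs ! m =
    (if m < i then gs ! m else if m = i then gs ! i \<otimes>\<^bsub>G\<^esub> gs ! Suc i else gs ! Suc m)"
proof -
  have len: "length (take i gs) = i" using assms by simp
  have eq: "merge_at G i gs = take i gs @ (gs ! i \<otimes>\<^bsub>G\<^esub> gs ! Suc i) # drop (Suc (Suc i)) gs"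
    by (simp add: merge_at_def)
  consider "m < i" | "m = i" | "i < m" by linarith
  then show ?thesis
  proof cases
    case 1
    then show ?thesis unfolding eq using len by (simp add: nth_append)
  next
    case 2
    then show ?thesis unfolding eq using len by (metis nth_append_length less_irrefl)
  next
    case 3
    then have "merge_at G i gs ! m = drop (Suc (Suc i)) gs ! (m - i - 1)"
      unfolding eq using len by (simp add: nth_append nth_Cons')
    then show ?thesis using 3 assms by simp
  qed
qed

subsection \<open>Cup products of homomorphisms to \<open>\<bbbF>\<^sub>p\<close>\<close>

lemma alternating_telescope:
  "A 0 + (\<Sum>i<n. (-1) ^ (i + 1) * (A i + A (Suc i))) + (-1) ^ (n + 1) * A n = (0::int)"
  by (induction n) (simp_all add: distrib_left)

lemma prod_homs_merge_at_dvd: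
  fixes G (structure) and \<psi> :: "nat \<Rightarrow> 'a \<Rightarrow> int"
  assumes hom: "\<And>m x y. x \<in> carrier G \<Longrightarrow> y \<in> carrier G \<Longrightarrow> p dvd \<psi> m (x \<otimes> y) - \<psi> m x - \<psi> m y"
    and len: "length gs = Suc n" and car: "set gs \<subseteq> carrier G" and i: "i < n"
  shows "p dvd (\<Prod>m<n. \<psi> m (merge_at G i gs ! m))
    - (\<Prod>m<n. \<psi> m (gs ! (if m < i then m else Suc m)))
    - (\<Prod>m<n. \<psi> m (gs ! (if m < Suc i then m else Suc m)))"
proof -
  define Q where "Q = (\<Prod>m\<in>{..<n}-{i}. \<psi> m (gs ! (if m < i then m else Suc m)))"
  have i_in: "i \<in> {..<n}" using i by simp
  have car_i: "gs ! i \<in> carrier G" "gs ! Suc i \<in> carrier G"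
    using car len i nth_mem[of i gs] nth_mem[of "Suc i" gs] by auto
  have "(\<Prod>m<n. \<psi> m (merge_at G i gs ! m))
      = \<psi> i (merge_at G i gs ! i) * (\<Prod>m\<in>{..<n}-{i}. \<psi> m (merge_at G i gs ! m))"
    by (rule prod.remove[OF _ i_in]) simp
  also have "(\<Prod>m\<in>{..<n}-{i}. \<psi> m (merge_at G i gs ! m)) = Q"
    unfolding Q_def by (rule prod.cong[OF refl]) (use len i in \<open>auto simp: nth_merge_at\<close>)
  finally have merged: "(\<Prod>m<n. \<psi> m (merge_at G i gs ! m)) = \<psi> i (gs ! i \<otimes> gs ! Suc i) * Q"
    using len i by (simp add: nth_merge_at)
  have without_Suc_i: "(\<Prod>m<n. \<psi> m (gs ! (if m < i then m else Suc m))) = \<psi> i (gs ! Suc i) * Q"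
    unfolding Q_def by (subst prod.remove[OF _ i_in]) simp_all
  have "(\<Prod>m<n. \<psi> m (gs ! (if m < Suc i then m else Suc m)))
      = \<psi> i (gs ! i) * (\<Prod>m\<in>{..<n}-{i}. \<psi> m (gs ! (if m < Suc i then m else Suc m)))"
    by (subst prod.remove[OF _ i_in]) simp_all
  also have "(\<Prod>m\<in>{..<n}-{i}. \<psi> m (gs ! (if m < Suc i then m else Suc m))) = Q"
    unfolding Q_def by (rule prod.cong[OF refl]) auto
  finally have without_i: "(\<Prod>m<n. \<psi> m (gs ! (if m < Suc i then m else Suc m))) = \<psi> i (gs ! i) * Q" .
  have "\<psi> i (gs ! i \<otimes> gs ! Suc i) * Q - \<psi> i (gs ! Suc i) * Q - \<psi> i (gs ! i) * Q
      = (\<psi> i (gs ! i \<otimes> gs ! Suc i) - \<psi> i (gs ! i) - \<psi> i (gs ! Suc i)) * Q"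
    by (simp add: algebra_simps)
  then show ?thesis
    unfolding merged without_Suc_i without_i using hom[OF car_i] by simp
qed

lemma prod_of_homs_is_cocycle:
  fixes G (structure) and \<psi> :: "nat \<Rightarrow> 'a \<Rightarrow> int"
  assumes hom: "\<And>m x y. x \<in> carrier G \<Longrightarrow> y \<in> carrier G \<Longrightarrow> p dvd \<psi> m (x \<otimes> y) - \<psi> m x - \<psi> m y"
  shows "is_cocycle G p n (\<lambda>gs. \<Prod>m<n. \<psi> m (gs ! m))"
  unfolding is_cocycle_def tuples_def
proof (intro ballI, clarify)
  fix gs :: "'a list" assume len: "length gs = n + 1" and car: "set gs \<subseteq> carrier G"
  define f where "f = (\<lambda>gs. \<Prod>m<n. \<psi> m (gs ! m))"
  \<comment> \<open>\<open>A i\<close> is f evaluated on gs with the entry i deleted.\<close>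
  define A where "A i = (\<Prod>m<n. \<psi> m (gs ! (if m < i then m else Suc m)))" for i
  have tl: "f (tl gs) = A 0" unfolding f_def A_def
    by (rule prod.cong[OF refl]) (use len in \<open>simp add: nth_tl\<close>)
  have butlast: "f (butlast gs) = A n" unfolding f_def A_def
    by (rule prod.cong[OF refl]) (use len in \<open>simp add: nth_butlast\<close>)
  have "(\<Sum>i<n. (-1) ^ (i + 1) * (f (merge_at G i gs) - A i - A (Suc i)))
      = (\<Sum>i<n. (-1) ^ (i + 1) * f (merge_at G i gs)) - (\<Sum>i<n. (-1) ^ (i + 1) * (A i + A (Suc i)))"
    unfolding sum_subtractf[symmetric] by (rule sum.cong[OF refl]) (simp add: algebra_simps)
  then have "cobdry G n f gs = (\<Sum>i<n. (-1) ^ (i + 1) * (f (merge_at G i gs) - A i - A (Suc i)))"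
    using alternating_telescope[of A n] unfolding cobdry_def tl butlast by linarith
  moreover have "p dvd (\<Sum>i<n. (-1) ^ (i + 1) * (f (merge_at G i gs) - A i - A (Suc i)))"
    unfolding f_def A_def using len car
    by (intro dvd_sum dvd_mult prod_homs_merge_at_dvd[OF hom]) simp_all
  ultimately show "p dvd cobdry G n (\<lambda>gs. \<Prod>m<n. \<psi> m (gs ! m)) gs" unfolding f_def by simp
qed

subsection \<open>Abelian cycles\<close>

definition perm_tuple :: "(nat \<Rightarrow> 'a) \<Rightarrow> nat \<Rightarrow> (nat \<Rightarrow> nat) \<Rightarrow> 'a list" where
  "perm_tuple e N \<sigma> = map (\<lambda>m. e (\<sigma> m)) [0..<N]"

text \<open>The value of a cochain F on the abelian cycle \<open>\<Sum>\<^sub>\<sigma> sign \<sigma> [e(\<sigma> 0) | \<dots> | e(\<sigma>(N-1))]\<close>;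
  for pairwise commuting \<open>e k\<close> this is a cycle of the bar complex.\<close>
definition abelian_pairing :: "('a list \<Rightarrow> int) \<Rightarrow> (nat \<Rightarrow> 'a) \<Rightarrow> nat \<Rightarrow> int" where
  "abelian_pairing F e N = (\<Sum>\<sigma>\<in>{\<sigma>. \<sigma> permutes {..<N}}. sign \<sigma> * F (perm_tuple e N \<sigma>))"

lemma length_perm_tuple: "length (perm_tuple e N \<sigma>) = N"
  by (simp add: perm_tuple_def)

lemma nth_perm_tuple: "m < N \<Longrightarrow> perm_tuple e N \<sigma> ! m = e (\<sigma> m)"
  by (simp add: perm_tuple_def del: upt_Suc)

lemma perm_tuple_in_tuples: "(\<And>k. e k \<in> carrier G) \<Longrightarrow> perm_tuple e N \<sigma> \<in> tuples G N"
  by (auto simp: tuples_def perm_tuple_def)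

lemma permutation_if_permutes_lessThan: "\<sigma> permutes {..<(N::nat)} \<Longrightarrow> permutation \<sigma>"
  unfolding permutation_permutes by (intro exI[of _ "{..<N}"]) simp

fun cyclic_shift :: "nat \<Rightarrow> nat \<Rightarrow> nat" where
  "cyclic_shift 0 = id"
| "cyclic_shift (Suc k) = cyclic_shift k \<circ> transpose k (Suc k)"

lemma cyclic_shift_apply: "cyclic_shift k m = (if m < k then Suc m else if m = k then 0 else m)"
  by (induction k arbitrary: m) (auto simp: transpose_def)

lemma cyclic_shift_permutes: "cyclic_shift k permutes {..k}"
proof (induction k)
  case 0
  then show ?case by (metis cyclic_shift.simps(1) permutes_id)
next
  case (Suc k)
  have "cyclic_shift k permutes {..Suc k}" using Suc permutes_subset by fastforce
  moreover have "transpose k (Suc k) permutes {..Suc k}" by (rule permutes_swap_id) auto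
  ultimately show ?case using permutes_compose by (simp only: cyclic_shift.simps) blast
qed

lemma sign_cyclic_shift: "sign (cyclic_shift k) = ((-1::int) ^ k)"
proof (induction k)
  case 0
  then show ?case by simp
next
  case (Suc k)
  have "permutation (cyclic_shift k)"
    using cyclic_shift_permutes permutation_permutes by blast
  moreover have "permutation (transpose k (Suc k))" by (simp add: permutation_swap_id)
  ultimately have "sign (cyclic_shift k \<circ> transpose k (Suc k))
      = sign (cyclic_shift k) * sign (transpose k (Suc k))"
    by (rule sign_compose)
  then show ?case using Suc by (simp only: cyclic_shift.simps) (simp add: sign_swap_id)
qed

text \<open>Precomposing with the transposition (i i+1) preserves the merged tuple but flips the sign.\<close>
lemma sum_sign_merge_at_eq_0:
  fixes G (structure)
  assumes comm: "\<And>a b. e a \<otimes> e b = e b \<otimes> e a" and i: "i < n"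
  shows "(\<Sum>\<sigma>\<in>{\<sigma>. \<sigma> permutes {..<Suc n}}. sign \<sigma> * h (merge_at G i (perm_tuple e (Suc n) \<sigma>))) = 0"
    (is "?S = 0")
proof -
  let ?t = "transpose i (Suc i)"
  have t: "?t permutes {..<Suc n}" by (rule permutes_swap_id) (use i in auto)
  have merge_swap: "merge_at G i (perm_tuple e (Suc n) (\<sigma> \<circ> ?t)) = merge_at G i (perm_tuple e (Suc n) \<sigma>)"
    for \<sigma>
    by (rule nth_equalityI)
      (use i in \<open>auto simp: length_merge_at nth_merge_at length_perm_tuple nth_perm_tuple comm\<close>)
  have "?S = (\<Sum>\<sigma>\<in>{\<sigma>. \<sigma> permutes {..<Suc n}}.
               sign (\<sigma> \<circ> ?t) * h (merge_at G i (perm_tuple e (Suc n) (\<sigma> \<circ> ?t))))"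
    by (rule sum_permutations_compose_right[OF t])
  also have "\<dots> = - ?S"
    unfolding sum_negf[symmetric]
    by (rule sum.cong[OF refl])
      (auto simp: merge_swap sign_compose permutation_swap_id sign_swap_id
         dest: permutation_if_permutes_lessThan)
  finally show ?thesis by simp
qed

lemma sum_sign_butlast_perm_tuple:
  "(\<Sum>\<sigma>\<in>{\<sigma>. \<sigma> permutes {..<Suc n}}. sign \<sigma> * h (butlast (perm_tuple e (Suc n) \<sigma>)))
    = (-1) ^ n * (\<Sum>\<sigma>\<in>{\<sigma>. \<sigma> permutes {..<Suc n}}. sign \<sigma> * h (tl (perm_tuple e (Suc n) \<sigma>)))"
proof -
  have shift: "cyclic_shift n permutes {..<Suc n}"
    using cyclic_shift_permutes[of n] by (simp add: lessThan_Suc_atMost)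
  have butlast_shift: "butlast (perm_tuple e (Suc n) (\<sigma> \<circ> cyclic_shift n)) = tl (perm_tuple e (Suc n) \<sigma>)"
    for \<sigma>
    by (rule nth_equalityI)
      (auto simp: length_perm_tuple nth_butlast nth_tl nth_perm_tuple cyclic_shift_apply)
  have "(\<Sum>\<sigma>\<in>{\<sigma>. \<sigma> permutes {..<Suc n}}. sign \<sigma> * h (butlast (perm_tuple e (Suc n) \<sigma>)))
      = (\<Sum>\<sigma>\<in>{\<sigma>. \<sigma> permutes {..<Suc n}}.
           sign (\<sigma> \<circ> cyclic_shift n) * h (butlast (perm_tuple e (Suc n) (\<sigma> \<circ> cyclic_shift n))))"
    by (rule sum_permutations_compose_right[OF shift])
  also have "\<dots> = (\<Sum>\<sigma>\<in>{\<sigma>. \<sigma> permutes {..<Suc n}}. (-1) ^ n * (sign \<sigma> * h (tl (perm_tuple e (Suc n) \<sigma>))))"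
    using permutation_if_permutes_lessThan[OF shift]
    by (intro sum.cong[OF refl])
      (auto simp: butlast_shift sign_compose sign_cyclic_shift dest: permutation_if_permutes_lessThan)
  finally show ?thesis by (simp add: sum_distrib_left)
qed

lemma abelian_pairing_cobdry_eq_0:
  fixes G (structure)
  assumes comm: "\<And>a b. e a \<otimes> e b = e b \<otimes> e a"
  shows "abelian_pairing (cobdry G n h) e (Suc n) = 0"
proof -
  define S where "S = {\<sigma>. \<sigma> permutes {..<Suc n}}"
  define L where "L = perm_tuple e (Suc n)"
  have "abelian_pairing (cobdry G n h) e (Suc n)
      = (\<Sum>\<sigma>\<in>S. sign \<sigma> * h (tl (L \<sigma>)))
        + (\<Sum>i<n. (-1) ^ (i + 1) * (\<Sum>\<sigma>\<in>S. sign \<sigma> * h (merge_at G i (L \<sigma>))))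
        + (-1) ^ (n + 1) * (\<Sum>\<sigma>\<in>S. sign \<sigma> * h (butlast (L \<sigma>)))"
    unfolding abelian_pairing_def cobdry_def S_def[symmetric] L_def[symmetric]
    by (simp only: distrib_left sum.distrib sum_distrib_left sum.swap[of _ S] mult.left_commute)
  also have "\<dots> = 0"
    unfolding S_def L_def sum_sign_butlast_perm_tuple
    by (simp add: sum_sign_merge_at_eq_0[where e = e, OF comm] power_add)
  finally show ?thesis .
qed

lemma abelian_pairing_diff_sum:
  "abelian_pairing (\<lambda>gs. F gs - (\<Sum>k\<in>K. a k * c k gs)) e N
    = abelian_pairing F e N - (\<Sum>k\<in>K. a k * abelian_pairing (c k) e N)"
  unfolding abelian_pairing_def
  by (simp add: right_diff_distrib sum_subtractf sum_distrib_left mult.left_commute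
      sum.swap[of _ "{\<sigma>. \<sigma> permutes {..<N}}"])

lemma abelian_pairing_coboundary_dvd:
  fixes G (structure)
  assumes comm: "\<And>a b. e a \<otimes> e b = e b \<otimes> e a"
    and car: "\<And>k. e k \<in> carrier G"
    and cob: "is_coboundary G p (Suc n) F"
  shows "p dvd abelian_pairing F e (Suc n)"
proof -
  obtain h where h: "\<And>gs. gs \<in> tuples G (Suc n) \<Longrightarrow> p dvd F gs - cobdry G n h gs"
    using cob unfolding is_coboundary_def by auto
  have "p dvd abelian_pairing (\<lambda>gs. F gs - cobdry G n h gs) e (Suc n)"
    unfolding abelian_pairing_def
    by (intro dvd_sum dvd_mult h perm_tuple_in_tuples car)
  also have "abelian_pairing (\<lambda>gs. F gs - cobdry G n h gs) e (Suc n) = abelian_pairing F e (Suc n)"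
    using abelian_pairing_diff_sum[where K = "{()}" and a = "\<lambda>_. 1" and c = "\<lambda>_. cobdry G n h"]
    by (simp add: abelian_pairing_cobdry_eq_0[OF comm])
  finally show ?thesis .
qed

lemma abelian_pairing_block_product:
  assumes dual: "\<And>m k. \<psi> m (E k) = (if k = m then 1 else 0)" and N: "0 < N"
  shows "abelian_pairing (\<lambda>gs. \<Prod>m<N. \<psi> (l * N + m) (gs ! m)) (\<lambda>k. E (l' * N + k)) N
    = (if l = l' then 1 else 0)"
proof -
  have indicator: "(\<Prod>m<N. if l' * N + \<sigma> m = l * N + m then 1 else 0) = (if l = l' \<and> \<sigma> = id then 1 else 0 :: int)"
    if \<sigma>: "\<sigma> permutes {..<N}" for \<sigma>
  proof (cases "l = l' \<and> \<sigma> = id")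
    case False
    have "\<exists>m<N. l' * N + \<sigma> m \<noteq> l * N + m"
    proof (rule ccontr)
      assume "\<not> ?thesis"
      then have eq: "l' * N + \<sigma> m = l * N + m" if "m < N" for m
        using that by blast
      have "\<sigma> 0 < N" using permutes_in_image[OF \<sigma>] N by simp
      then have "l' = l" using eq[OF N] N
        by (metis add_0_right div_mult_self3 div_less neq0_conv div_mult_self1_is_m)
      moreover have "\<sigma> x = x" for x
        using eq \<open>l' = l\<close> permutes_not_in[OF \<sigma>, of x] by (cases "x < N") auto
      ultimately show False using False by auto
    qed
    then show ?thesis using False by (auto intro: prod_zero)
  qed simp
  have "abelian_pairing (\<lambda>gs. \<Prod>m<N. \<psi> (l * N + m) (gs ! m)) (\<lambda>k. E (l' * N + k)) N
      = (\<Sum>\<sigma>\<in>{\<sigma>. \<sigma> permutes {..<N}}. sign \<sigma> * (if l = l' \<and> \<sigma> = id then 1 else 0))"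
    unfolding abelian_pairing_def
    by (intro sum.cong refl) (simp add: nth_perm_tuple dual indicator[symmetric])
  also have "\<dots> = (if l = l' then 1 else 0)"
    by (cases "l = l'") (simp_all add: if_distrib permutes_id finite_permutations cong: if_cong)
  finally show ?thesis .
qed

subsection \<open>A criterion for infinite dimensionality\<close>

lemma exists_pair_cong_mod:
  fixes P :: "nat \<Rightarrow> nat \<Rightarrow> int" and p :: int
  assumes "p > 0"
  shows "\<exists>l l'. l \<noteq> l' \<and> (\<forall>k<K. P k l mod p = P k l' mod p)"
proof -
  define g where "g l = map (\<lambda>k. P k l mod p) [0..<K]" for l
  have "range g \<subseteq> {xs. set xs \<subseteq> {0..<p} \<and> length xs = K}"
    using assms by (auto simp: g_def)
  then have "finite (range g)"
    by (rule finite_subset) (rule finite_lists_length_eq, simp)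
  then have "\<not> inj g" using finite_imageD by blast
  then obtain l l' where "l \<noteq> l'" "g l = g l'" unfolding inj_def by blast
  then show ?thesis by (intro exI[of _ l] exI[of _ l']) (auto simp: g_def dest: map_eq_conv[THEN iffD1])
qed

lemma not_cohom_fin_gen_if_dual_family:
  fixes G (structure) and f :: "nat \<Rightarrow> 'a list \<Rightarrow> int" and e :: "nat \<Rightarrow> nat \<Rightarrow> 'a"
  assumes p: "prime p"
    and cocycle: "\<And>l. is_cocycle G p (Suc n) (f l)"
    and car: "\<And>l k. e l k \<in> carrier G"
    and comm: "\<And>l k k'. e l k \<otimes> e l k' = e l k' \<otimes> e l k"
    and dual: "\<And>l l'. abelian_pairing (f l) (e l') (Suc n) = (if l = l' then 1 else 0)"
  shows "\<not> cohom_fin_gen G p (Suc n)"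
proof
  assume "cohom_fin_gen G p (Suc n)"
  then obtain cs where span: "\<And>F. is_cocycle G p (Suc n) F \<Longrightarrow>
      \<exists>a. is_coboundary G p (Suc n) (\<lambda>gs. F gs - (\<Sum>k<length cs. a k * (cs ! k) gs))"
    unfolding cohom_fin_gen_def by blast
  define P where "P k l = abelian_pairing (cs ! k) (e l) (Suc n)" for k l
  obtain l l' where ll': "l \<noteq> l'" and cong: "\<And>k. k < length cs \<Longrightarrow> P k l mod p = P k l' mod p"
    using exists_pair_cong_mod[where P = P and p = p and K = "length cs"] p prime_gt_0_int by blast
  obtain a where cob: "is_coboundary G p (Suc n) (\<lambda>gs. f l gs - (\<Sum>k<length cs. a k * (cs ! k) gs))"
    using span[OF cocycle] by blast
  have detect: "p dvd (if l = x then 1 else 0) - (\<Sum>k<length cs. a k * P k x)" for x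
    using abelian_pairing_coboundary_dvd[where e = "e x", OF comm car cob]
    by (simp add: abelian_pairing_diff_sum dual P_def)
  have at_l: "p dvd 1 - (\<Sum>k<length cs. a k * P k l)"
    using detect[of l] by simp
  have at_l': "p dvd 0 - (\<Sum>k<length cs. a k * P k l')"
    using detect[of l'] ll' by simp
  have congruent: "p dvd (\<Sum>k<length cs. a k * (P k l - P k l'))"
    by (intro dvd_sum dvd_mult) (simp add: cong mod_eq_dvd_iff[symmetric])
  have "p dvd (1 - (\<Sum>k<length cs. a k * P k l)) - (0 - (\<Sum>k<length cs. a k * P k l'))
      + (\<Sum>k<length cs. a k * (P k l - P k l'))"
    by (rule dvd_add[OF dvd_diff[OF at_l at_l'] congruent])
  then have "p dvd 1"
    by (simp add: right_diff_distrib sum_subtractf)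
  then show False using p not_prime_unit by blast
qed

lemma not_cohom_fin_gen_if_dual_homs:
  fixes G (structure) and \<psi> :: "nat \<Rightarrow> 'a \<Rightarrow> int" and E :: "nat \<Rightarrow> 'a"
  assumes p: "prime p" and j: "j \<ge> 1"
    and hom: "\<And>m x y. x \<in> carrier G \<Longrightarrow> y \<in> carrier G \<Longrightarrow> p dvd \<psi> m (x \<otimes> y) - \<psi> m x - \<psi> m y"
    and car: "\<And>k. E k \<in> carrier G"
    and comm: "\<And>k k'. E k \<otimes> E k' = E k' \<otimes> E k"
    and dual: "\<And>m k. \<psi> m (E k) = (if k = m then 1 else 0)"
  shows "\<not> cohom_fin_gen G p j"
proof -
  obtain n where n: "j = Suc n" using j by (cases j) auto
  define F where "F l = (\<lambda>gs. \<Prod>m<j. \<psi> (l * j + m) (gs ! m))" for l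
  define e where "e l k = E (l * j + k)" for l k
  have "\<not> cohom_fin_gen G p (Suc n)"
  proof (rule not_cohom_fin_gen_if_dual_family[OF p])
    show "is_cocycle G p (Suc n) (F l)" for l
      unfolding F_def n[symmetric] by (rule prod_of_homs_is_cocycle) (rule hom)
    show "e l k \<in> carrier G" for l k
      unfolding e_def by (rule car)
    show "e l k \<otimes> e l k' = e l k' \<otimes> e l k" for l k k'
      unfolding e_def by (rule comm)
    show "abelian_pairing (F l) (e l') (Suc n) = (if l = l' then 1 else 0)" for l l'
      unfolding F_def e_def n[symmetric] using j by (intro abelian_pairing_block_product dual) simp
  qed
  then show ?thesis using n by simp
qed

subsection \<open>The congruence subgroup\<close>

definition Emat :: "int \<Rightarrow> nat \<Rightarrow> nat \<Rightarrow> mat2" where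
  "Emat p r k = (1, smult (p ^ r) (monom 1 k), 0, 1)"

definition phi :: "int \<Rightarrow> nat \<Rightarrow> nat \<Rightarrow> mat2 \<Rightarrow> int" where
  "phi p r k M = coeff (fst (snd M)) k div p ^ r"

lemma Gamma_mult: "x \<otimes>\<^bsub>Gamma p r\<^esub> y = mat2_mult x y"
  by (simp add: Gamma_def)

lemma Emat_in_Gamma: "Emat p r k \<in> carrier (Gamma p r)"
  by (simp add: Gamma_def Emat_def poly_zero_mod_def coeff_monom)

lemma Emat_commute: "Emat p r a \<otimes>\<^bsub>Gamma p r\<^esub> Emat p r b = Emat p r b \<otimes>\<^bsub>Gamma p r\<^esub> Emat p r a"
  by (simp add: Gamma_mult Emat_def add.commute)

lemma phi_Emat: "p \<noteq> 0 \<Longrightarrow> phi p r m (Emat p r k) = (if k = m then 1 else 0)"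
  by (simp add: phi_def Emat_def coeff_monom)

lemma poly_zero_mod_mult:
  assumes "poly_zero_mod m x" "poly_zero_mod m' y"
  shows "poly_zero_mod (m * m') (x * y)"
  unfolding poly_zero_mod_def coeff_mult
  using assms by (auto simp: poly_zero_mod_def intro!: dvd_sum mult_dvd_mono)

lemma phi_hom:
  assumes p: "prime p" and r: "r \<ge> 1"
    and x: "x \<in> carrier (Gamma p r)" and y: "y \<in> carrier (Gamma p r)"
  shows "p dvd phi p r k (x \<otimes>\<^bsub>Gamma p r\<^esub> y) - phi p r k x - phi p r k y"
proof -
  obtain a b c d where x_eq: "x = (a, b, c, d)" by (cases x) auto
  obtain a' b' c' d' where y_eq: "y = (a', b', c', d')" by (cases y) auto
  define m where "m = p ^ r"
  have m0: "m \<noteq> 0" using p by (simp add: m_def prime_gt_0_int)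
  have p_dvd_m: "p dvd m" using r by (simp add: m_def dvd_power)
  from x have a: "poly_zero_mod m (a - 1)" and b: "poly_zero_mod m b"
    by (simp_all add: Gamma_def x_eq m_def)
  from y have b': "poly_zero_mod m b'" and d': "poly_zero_mod m (d' - 1)"
    by (simp_all add: Gamma_def y_eq m_def)
  define Z where "Z = (a - 1) * b' + b * (d' - 1)"
  have Z: "poly_zero_mod (m * m) Z"
    using poly_zero_mod_mult[OF a b'] poly_zero_mod_mult[OF b d']
    unfolding Z_def poly_zero_mod_def by simp
  have upper_right: "fst (snd (x \<otimes>\<^bsub>Gamma p r\<^esub> y)) = b' + b + Z"
    by (simp add: Gamma_mult x_eq y_eq Z_def algebra_simps)
  obtain \<beta> where \<beta>: "coeff b k = m * \<beta>" using b unfolding poly_zero_mod_def by blast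
  obtain \<beta>' where \<beta>': "coeff b' k = m * \<beta>'" using b' unfolding poly_zero_mod_def by blast
  obtain \<gamma> where \<gamma>: "coeff Z k = m * m * \<gamma>" using Z unfolding poly_zero_mod_def by blast
  have "phi p r k (x \<otimes>\<^bsub>Gamma p r\<^esub> y) = (m * (\<beta>' + \<beta> + m * \<gamma>)) div m"
    unfolding phi_def upper_right m_def[symmetric] by (simp add: \<beta> \<beta>' \<gamma> algebra_simps)
  then have "phi p r k (x \<otimes>\<^bsub>Gamma p r\<^esub> y) = \<beta>' + \<beta> + m * \<gamma>" using m0 by simp
  moreover have "phi p r k x = \<beta>" "phi p r k y = \<beta>'"
    unfolding phi_def m_def[symmetric] using m0 by (simp_all add: x_eq y_eq \<beta> \<beta>')
  ultimately show ?thesis using p_dvd_m by simp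
qed

theorem theorem5p1:
  fixes j r :: nat and p :: int
  assumes "j \<ge> 1" and "r \<ge> 1" and "prime p"
  shows "\<not> cohom_fin_gen (Gamma p r) p j"
proof (rule not_cohom_fin_gen_if_dual_homs[where \<psi> = "phi p r" and E = "Emat p r"])
  show "phi p r m (Emat p r k) = (if k = m then 1 else 0)" for m k
    using phi_Emat prime_gt_0_int[OF \<open>prime p\<close>] by simp
qed (use assms in \<open>auto intro: phi_hom Emat_in_Gamma Emat_commute\<close>)

end
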